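(* Let $n\geq3$, $\mathcal{O}\subset\mathbb{R}^n$ bounded open with $C^2$ boundary, $\beta>0$, and suppose (H1) holds. Then for every bounded interval $I\subset\mathbb{R}$, $D(A(t))=D$ for all $t\in I$, where $D=\{v\in H^2(\mathcal{O}): \sum_{k=1}^n n_k(y)\sum_{j=1}^n\tilde p_{jk}(y)\frac{\partial v}{\partial y_k}=0 \text{ on }\partial\mathcal{O}\}$ and $\tilde p_{jk}(y)=\sum_{i=1}^n p_{ij}(y)p_{ik}(y)$.
   Context: $r\in C^1(\mathbb{R}\times\overline{\mathcal{O}},\mathbb{R}^n)$ with $r(t,\cdot):\overline{\mathcal{O}}\to r(t,\overline{\mathcal{O}})$ a $C^2$ diffeomorphism for each $t$, inverse $r^{-1}(t,\cdot)=(r^{-1}_1,\dots,r^{-1}_n)$. $a_{jk}(t,y)=\sum_{i=1}^n \frac{\partial r^{-1}_j}{\partial x_i}(t,r(t,y))\frac{\partial r^{-1}_k}{\partial x_i}(t,r(t,y))$. $T(t,y)$ is the matrix with $(i,k)$ entry $\frac{\partial r^{-1}_k}{\partial x_i}(t,r(t,y))$, $n(y)$ the unit outward normal of $\partial\mathcal{O}$, $K(t,y)=1/\|T(t,y)n(y)\|$, $\Gamma(t,v)=K(t,y)\sum_k n_k(y)\sum_j a_{jk}(t,y)\frac{\partial v}{\partial y_k}$ on $\partial\mathcal{O}$. $A(t)v=-\sum_{j,k}\partial_{y_j}(a_{jk}(t,\cdot)\partial_{y_k}v)+\beta v$ with $D(A(t))=\{v\in H^2(\mathcal{O}):\Gamma(t,v)=0\text{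 on }\partial\mathcal{O}\}$. (H1): $r^{-1}(\cdot,x)$ is $C^1$ in $t$, and there are $h\in C(\mathbb{R})$, $p_{ik}\in C^1(\mathbb{R}^n,\mathbb{R})$ with $\frac{\partial r^{-1}_k}{\partial x_i}(t,r(t,y))=h(t)p_{ik}(y)$ for all $t$, $y\in\overline{\mathcal{O}}$, $i,k$; $h$ is Hölder continuous with exponent $\theta\in(0,1]$ and $0<h_0\le h\le h_1$. *)

theory Defs
  imports "HOL-Analysis.Analysis"
begin

definition C1_on :: "'a::euclidean_space set \<Rightarrow> ('a \<Rightarrow> 'b::real_normed_vector) \<Rightarrow> bool" where
  "C1_on U f \<longleftrightarrow> (\<exists>f'. (\<forall>x\<in>U. (f has_derivative blinfun_apply (f' x)) (at x)) \<and> continuous_on U f')"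

definition C2_on :: "'a::euclidean_space set \<Rightarrow> ('a \<Rightarrow> 'b::real_normed_vector) \<Rightarrow> bool" where
  "C2_on U f \<longleftrightarrow> (\<exists>f'. (\<forall>x\<in>U. (f has_derivative blinfun_apply (f' x)) (at x)) \<and> C1_on U f')"

text \<open>Partial derivative: pd f x i k = (d f_k / d x_i)(x).\<close>
definition pd :: "(real^'n \<Rightarrow> real^'m) \<Rightarrow> real^'n \<Rightarrow> 'n \<Rightarrow> 'm \<Rightarrow> real" where
  "pd f x i k = (frechet_derivative f (at x) (axis i 1)) $ k"

definition pds :: "(real^'n \<Rightarrow> real) \<Rightarrow> 'n \<Rightarrow> real^'n \<Rightarrow> real" where
  "pds f i x = frechet_derivative f (at x) (axis i 1)"

definition grad :: "(real^'n \<Rightarrow> real) \<Rightarrow> real^'n \<Rightarrow> real^'n" where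
  "grad f x = (\<chi> i. pds f i x)"

definition C2_boundary_normal :: "(real^'n) set \<Rightarrow> (real^'n \<Rightarrow> real^'n) \<Rightarrow> bool" where
  "C2_boundary_normal \<Omega> nu \<longleftrightarrow>
     (\<forall>x0\<in>frontier \<Omega>. \<exists>U \<phi>. open U \<and> x0 \<in> U \<and> C2_on U \<phi> \<and>
        (\<forall>y\<in>U. grad \<phi> y \<noteq> 0) \<and>
        \<Omega> \<inter> U = {y\<in>U. \<phi> y < 0} \<and> frontier \<Omega> \<inter> U = {y\<in>U. \<phi> y = 0} \<and>
        (\<forall>y\<in>frontier \<Omega> \<inter> U. nu y = grad \<phi> y /\<^sub>R norm (grad \<phi> y)))"

definition L2_on :: "(real^'n) set \<Rightarrow> (real^'n \<Rightarrow> real) \<Rightarrow> bool" where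
  "L2_on U f \<longleftrightarrow> f \<in> borel_measurable (lebesgue_on U) \<and> integrable (lebesgue_on U) (\<lambda>x. (f x)\<^sup>2)"

definition test_fun :: "(real^'n) set \<Rightarrow> (real^'n \<Rightarrow> real) \<Rightarrow> bool" where
  "test_fun U \<phi> \<longleftrightarrow> C1_on UNIV \<phi> \<and> compact (closure {x. \<phi> x \<noteq> 0}) \<and> closure {x. \<phi> x \<noteq> 0} \<subseteq> U"

definition weak_deriv :: "(real^'n) set \<Rightarrow> (real^'n \<Rightarrow> real) \<Rightarrow> 'n \<Rightarrow> (real^'n \<Rightarrow> real) \<Rightarrow> bool" where
  "weak_deriv U f i g \<longleftrightarrow>
     (\<forall>\<phi>. test_fun U \<phi> \<longrightarrow>
        integrable (lebesgue_on U) (\<lambda>x. f x * pds \<phi> i x) \<and>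
        integrable (lebesgue_on U) (\<lambda>x. g x * \<phi> x) \<and>
        integral\<^sup>L (lebesgue_on U) (\<lambda>x. f x * pds \<phi> i x) = - integral\<^sup>L (lebesgue_on U) (\<lambda>x. g x * \<phi> x))"

definition H1_on :: "(real^'n) set \<Rightarrow> (real^'n \<Rightarrow> real) \<Rightarrow> bool" where
  "H1_on U f \<longleftrightarrow> L2_on U f \<and> (\<forall>i. \<exists>g. L2_on U g \<and> weak_deriv U f i g)"

definition H2_on :: "(real^'n) set \<Rightarrow> (real^'n \<Rightarrow> real) \<Rightarrow> bool" where
  "H2_on U f \<longleftrightarrow> L2_on U f \<and> (\<forall>i. \<exists>g. H1_on U g \<and> weak_deriv U f i g)"

definition hausdorff_null :: "real \<Rightarrow> 'a::metric_space set \<Rightarrow> bool" where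
  "hausdorff_null d E \<longleftrightarrow>
     (\<forall>\<epsilon>>0. \<exists>C :: nat \<Rightarrow> 'a set. E \<subseteq> (\<Union>m. C m) \<and> (\<forall>m. bounded (C m)) \<and>
        summable (\<lambda>m. diameter (C m) powr d) \<and> (\<Sum>m. diameter (C m) powr d) < \<epsilon>)"

text \<open>Average of f over B(y,rho) \<inter> U; its limit as rho \<rightarrow> 0+ is the boundary trace
  (for surface-a.e. boundary point y).\<close>
definition bavg :: "(real^'n) set \<Rightarrow> (real^'n \<Rightarrow> real) \<Rightarrow> real^'n \<Rightarrow> real \<Rightarrow> real" where
  "bavg U f y \<rho> = integral\<^sup>L (lebesgue_on (ball y \<rho> \<inter> U)) f / measure lebesgue (ball y \<rho> \<inter> U)"

text \<open>For v with weak gradient (g_k) in H^1: the boundary condition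
  sum_k c_k(y) * tr(d v / d y_k)(y) = 0 for surface-a.e. y on the boundary of U.\<close>
definition bc_zero :: "(real^'n) set \<Rightarrow> ('n \<Rightarrow> real^'n \<Rightarrow> real) \<Rightarrow> (real^'n \<Rightarrow> real) \<Rightarrow> bool" where
  "bc_zero U c v \<longleftrightarrow>
     (\<exists>g. (\<forall>k. H1_on U (g k) \<and> weak_deriv U v k (g k)) \<and>
        hausdorff_null (real CARD('n) - 1)
          {y \<in> frontier U. \<not> (\<exists>L. (\<forall>k. ((\<lambda>\<rho>. bavg U (g k) y \<rho>) \<longlongrightarrow> L k) (at_right 0)) \<and>
                                   (\<Sum>k\<in>UNIV. c k y * L k) = 0)})"

definition a_coef :: "(real \<Rightarrow> real^'n \<Rightarrow> real^'n) \<Rightarrow> (real \<Rightarrow> real^'n \<Rightarrow> real^'n) \<Rightarrow> real \<Rightarrow> 'n \<Rightarrow> 'n \<Rightarrow> real^'n \<Rightarrow> real" where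
  "a_coef r rinv t j k y = (\<Sum>i\<in>UNIV. pd (rinv t) (r t y) i j * pd (rinv t) (r t y) i k)"

definition Tmat :: "(real \<Rightarrow> real^'n \<Rightarrow> real^'n) \<Rightarrow> (real \<Rightarrow> real^'n \<Rightarrow> real^'n) \<Rightarrow> real \<Rightarrow> real^'n \<Rightarrow> real^'n^'n" where
  "Tmat r rinv t y = (\<chi> i k. pd (rinv t) (r t y) i k)"

definition Kfun :: "(real \<Rightarrow> real^'n \<Rightarrow> real^'n) \<Rightarrow> (real \<Rightarrow> real^'n \<Rightarrow> real^'n) \<Rightarrow> (real^'n \<Rightarrow> real^'n) \<Rightarrow> real \<Rightarrow> real^'n \<Rightarrow> real" where
  "Kfun r rinv nu t y = 1 / norm (Tmat r rinv t y *v nu y)"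

text \<open>D(A(t)) = {v \<in> H^2(\<Omega>). Gamma(t,v) = 0 on the boundary}, where
  Gamma(t,v) = K(t,y) sum_k n_k(y) sum_j a_jk(t,y) dv/dy_k.\<close>
definition domA :: "(real^'n) set \<Rightarrow> (real \<Rightarrow> real^'n \<Rightarrow> real^'n) \<Rightarrow> (real \<Rightarrow> real^'n \<Rightarrow> real^'n) \<Rightarrow> (real^'n \<Rightarrow> real^'n) \<Rightarrow> real \<Rightarrow> (real^'n \<Rightarrow> real) set" where
  "domA \<Omega> r rinv nu t = {v. H2_on \<Omega> v \<and>
      bc_zero \<Omega> (\<lambda>k y. Kfun r rinv nu t y * (nu y $ k * (\<Sum>j\<in>UNIV. a_coef r rinv t j k y))) v}"

definition ptilde :: "('n \<Rightarrow> 'n \<Rightarrow> real^'n \<Rightarrow> real) \<Rightarrow> 'n \<Rightarrow> 'n \<Rightarrow> real^'n \<Rightarrow> real" where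
  "ptilde p j k y = (\<Sum>i\<in>UNIV. p i j y * p i k y)"

definition domD :: "(real^'n) set \<Rightarrow> ('n \<Rightarrow> 'n \<Rightarrow> real^'n \<Rightarrow> real) \<Rightarrow> (real^'n \<Rightarrow> real^'n) \<Rightarrow> (real^'n \<Rightarrow> real) set" where
  "domD \<Omega> p nu = {v. H2_on \<Omega> v \<and>
      bc_zero \<Omega> (\<lambda>k y. nu y $ k * (\<Sum>j\<in>UNIV. ptilde p j k y)) v}"

end

theory Submission
  imports Defs
begin

text \<open>Under (H1) the coefficients of the boundary operator factor as
  a_jk(t,y) = h(t)^2 p~_jk(y), so on the boundary the coefficient vector of Gamma(t,.) is
  K(t,y) h(t)^2 times that of the condition defining D. This factor is nonzero: h(t) > 0, and
  K(t,y) = 1 / |T(t,y) n(y)| is nonzero because T(t,y) is the matrix of the adjoint of the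
  derivative of r^{-1}(t,.) at r(t,y), which is surjective (it has the derivative of r(t,.) as
  right inverse), so its adjoint is injective and the unit normal n(y) is not annihilated.\<close>

lemma C1_on_imp_continuous_on:
  assumes "C1_on U f"
  shows "continuous_on U f"
  using assms unfolding C1_on_def
  by (meson continuous_at_imp_continuous_on has_derivative_continuous)

lemma C2_on_imp_C1_on:
  assumes "C2_on U f"
  shows "C1_on U f"
  using assms C1_on_imp_continuous_on unfolding C2_on_def C1_on_def by blast

lemma frechet_derivative_left_inverse_on_closure:
  fixes S :: "'a::euclidean_space set" and f :: "'a \<Rightarrow> 'b::euclidean_space" and g :: "'b \<Rightarrow> 'a"
  assumes S: "open S"
    and f: "closure S \<subseteq> U" "C1_on U f"
    and g: "f ` closure S \<subseteq> V" "C1_on V g"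
    and left_inverse: "\<And>y. y \<in> closure S \<Longrightarrow> g (f y) = y"
    and y: "y \<in> closure S"
  shows "frechet_derivative g (at (f y)) (frechet_derivative f (at y) v) = v"
proof -
  obtain f' where f': "\<And>x. x \<in> U \<Longrightarrow> (f has_derivative blinfun_apply (f' x)) (at x)"
    and cont_f': "continuous_on U f'"
    using f(2) unfolding C1_on_def by blast
  obtain g' where g': "\<And>x. x \<in> V \<Longrightarrow> (g has_derivative blinfun_apply (g' x)) (at x)"
    and cont_g': "continuous_on V g'"
    using g(2) unfolding C1_on_def by blast
  \<comment> \<open>The chain rule gives the identity only on the open set S; continuity of the
    derivatives carries it to the boundary.\<close>
  have "g' (f z) (f' z v) = v" if "z \<in> closure S" for z
  proof (rule continuous_constant_on_closure[where f = "\<lambda>z. g' (f z) (f' z v)"])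
    have "continuous_on (closure S) (\<lambda>z. g' (f z))"
      using continuous_on_compose2[OF cont_g' continuous_on_subset[OF C1_on_imp_continuous_on[OF f(2)] f(1)] g(1)] .
    then show "continuous_on (closure S) (\<lambda>z. g' (f z) (f' z v))"
      by (intro blinfun.continuous_on continuous_on_subset[OF cont_f' f(1)] continuous_on_const)
  next
    fix x assume x: "x \<in> S"
    have "((g \<circ> f) has_derivative (g' (f x) \<circ> f' x)) (at x)"
      using diff_chain_at[OF f' g'] x closure_subset f(1) g(1) by blast
    moreover have "((g \<circ> f) has_derivative id) (at x)"
      by (rule has_derivative_transform_within_open[OF has_derivative_id S x])
         (use left_inverse closure_subset in fastforce)
    ultimately have "g' (f x) \<circ> f' x = id"
      by (rule has_derivative_unique)
    then show "g' (f x) (f' x v) = v"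
      by (metis comp_apply id_apply)
  qed (fact that)
  moreover have "frechet_derivative f (at y) = f' y"
    using frechet_derivative_at f' f(1) y by (metis subsetD)
  moreover have "frechet_derivative g (at (f y)) = g' (f y)"
    using frechet_derivative_at g' g(1) y by (metis image_subset_iff)
  ultimately show ?thesis
    using y by simp
qed

lemma adjoint_nonzero_on_range:
  fixes L :: "'a::euclidean_space \<Rightarrow> 'b::euclidean_space"
  assumes "linear L" "w \<in> range L" "w \<noteq> 0"
  shows "adjoint L w \<noteq> 0"
proof
  assume "adjoint L w = 0"
  obtain x where "L x = w"
    using assms(2) by blast
  then have "w \<bullet> w = x \<bullet> adjoint L w"
    using adjoint_works[OF assms(1)] by simp
  with \<open>adjoint L w = 0\<close> assms(3) show False
    by simp
qed

lemma Tmat_mult_eq_adjoint: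
  assumes "linear (frechet_derivative (rinv t) (at (r t y)))"
  shows "Tmat r rinv t y *v w = adjoint (frechet_derivative (rinv t) (at (r t y))) w"
proof -
  have "(Tmat r rinv t y *v w) $ i = adjoint (frechet_derivative (rinv t) (at (r t y))) w $ i" for i
  proof -
    have "(Tmat r rinv t y *v w) $ i = frechet_derivative (rinv t) (at (r t y)) (axis i 1) \<bullet> w"
      by (simp add: inner_vec_def matrix_vector_mult_def Tmat_def pd_def)
    also have "\<dots> = axis i 1 \<bullet> adjoint (frechet_derivative (rinv t) (at (r t y))) w"
      by (simp add: adjoint_works[OF assms])
    finally show ?thesis
      by (simp add: inner_axis')
  qed
  then show ?thesis
    by (simp add: vec_eq_iff)
qed

lemma C2_boundary_normal_unit:
  assumes "C2_boundary_normal \<Omega> nu" "y \<in> frontier \<Omega>"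
  shows "norm (nu y) = 1"
proof -
  obtain U \<phi> where "y \<in> U" "\<forall>z\<in>U. grad \<phi> z \<noteq> 0"
      "\<forall>z\<in>frontier \<Omega> \<inter> U. nu z = grad \<phi> z /\<^sub>R norm (grad \<phi> z)"
    using bspec[OF assms(1)[unfolded C2_boundary_normal_def] assms(2)] by (elim exE conjE) blast
  with assms(2) show ?thesis
    by simp
qed

lemma Kfun_nonzero:
  assumes \<Omega>: "open \<Omega>" "C2_boundary_normal \<Omega> nu"
    and r: "closure \<Omega> \<subseteq> U" "C1_on U (r t)"
    and rinv: "r t ` closure \<Omega> \<subseteq> V" "C1_on V (rinv t)"
    and left_inverse: "\<And>y. y \<in> closure \<Omega> \<Longrightarrow> rinv t (r t y) = y"
    and y: "y \<in> frontier \<Omega>"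
  shows "Kfun r rinv nu t y \<noteq> 0"
proof -
  let ?D = "frechet_derivative (rinv t) (at (r t y))"
  have y_closure: "y \<in> closure \<Omega>"
    using y by (simp add: frontier_def)
  have "(rinv t has_derivative ?D) (at (r t y))"
    using rinv y_closure unfolding C1_on_def
    by (metis frechet_derivative_at image_subset_iff)
  then have linear: "linear ?D"
    using has_derivative_linear by blast
  have "nu y \<in> range ?D"
    using frechet_derivative_left_inverse_on_closure[OF \<Omega>(1) r rinv left_inverse y_closure]
    by (metis rangeI)
  moreover have "nu y \<noteq> 0"
    using C2_boundary_normal_unit[OF \<Omega>(2) y] by auto
  ultimately have "adjoint ?D (nu y) \<noteq> 0"
    by (rule adjoint_nonzero_on_range[OF linear])
  then have "Tmat r rinv t y *v nu y \<noteq> 0"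
    using Tmat_mult_eq_adjoint[where rinv = rinv and t = t and r = r and y = y, OF linear]
    by simp
  then show ?thesis
    by (simp add: Kfun_def)
qed

lemma a_coef_factor:
  assumes "\<And>i k. pd (rinv t) (r t y) i k = c * p i k y"
  shows "a_coef r rinv t j k y = c\<^sup>2 * ptilde p j k y"
  by (simp add: a_coef_def ptilde_def assms sum_distrib_left power2_eq_square algebra_simps)

lemma bc_zero_scale_cong:
  assumes "\<And>y. y \<in> frontier U \<Longrightarrow> \<exists>c. c \<noteq> 0 \<and> (\<forall>k. c1 k y = c * c2 k y)"
  shows "bc_zero U c1 v = bc_zero U c2 v"
proof -
  have zero_iff: "(\<Sum>k\<in>UNIV. c1 k y * L k) = 0 \<longleftrightarrow> (\<Sum>k\<in>UNIV. c2 k y * L k) = 0"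
    if y: "y \<in> frontier U" for y L
  proof -
    obtain c where "c \<noteq> 0" "\<And>k. c1 k y = c * c2 k y"
      using assms[OF y] by blast
    then have "(\<Sum>k\<in>UNIV. c1 k y * L k) = c * (\<Sum>k\<in>UNIV. c2 k y * L k)"
      by (simp add: sum_distrib_left mult.assoc)
    with \<open>c \<noteq> 0\<close> show ?thesis
      by simp
  qed
  have "{y \<in> frontier U. \<not> (\<exists>L. Q y L \<and> (\<Sum>k\<in>UNIV. c1 k y * L k) = 0)}
      = {y \<in> frontier U. \<not> (\<exists>L. Q y L \<and> (\<Sum>k\<in>UNIV. c2 k y * L k) = 0)}" for Q
    by (rule Collect_cong, rule conj_cong[OF refl]) (simp add: zero_iff)
  then show ?thesis
    unfolding bc_zero_def by (simp only:)
qed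

theorem lemma3p1:
  fixes \<Omega> :: "(real^'n) set"
    and nu :: "real^'n \<Rightarrow> real^'n"
    and \<beta> :: real
    and r rinv :: "real \<Rightarrow> real^'n \<Rightarrow> real^'n"
    and h :: "real \<Rightarrow> real"
    and p :: "'n \<Rightarrow> 'n \<Rightarrow> real^'n \<Rightarrow> real"
    and \<theta> h0 h1 :: real
  assumes dim: "CARD('n) \<ge> 3"
    and O_open: "open \<Omega>" and O_bounded: "bounded \<Omega>"
    and O_C2: "C2_boundary_normal \<Omega> nu"
    and beta_pos: "\<beta> > 0"
    and r_C1: "\<exists>U. open U \<and> closure \<Omega> \<subseteq> U \<and> C1_on (UNIV \<times> U) (\<lambda>(t, y). r t y)"
    and r_C2: "\<And>t. \<exists>U. open U \<and> closure \<Omega> \<subseteq> U \<and> C2_on U (r t)"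
    and rinv_C2: "\<And>t. \<exists>V. open V \<and> r t ` closure \<Omega> \<subseteq> V \<and> C2_on V (rinv t)"
    and rinv_left: "\<And>t y. y \<in> closure \<Omega> \<Longrightarrow> rinv t (r t y) = y"
    and rinv_right: "\<And>t x. x \<in> r t ` closure \<Omega> \<Longrightarrow> r t (rinv t x) = x"
    and H1_time: "\<And>x. C1_on UNIV (\<lambda>t. rinv t x)"
    and h_cont: "continuous_on UNIV h"
    and p_C1: "\<And>i k. C1_on UNIV (p i k)"
    and H1_fact: "\<And>t y i k. y \<in> closure \<Omega> \<Longrightarrow> pd (rinv t) (r t y) i k = h t * p i k y"
    and theta: "0 < \<theta>" "\<theta> \<le> 1"
    and h_hoelder: "\<exists>C. \<forall>s t. \<bar>h s - h t\<bar> \<le> C * \<bar>s - t\<bar> powr \<theta>"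
    and h_bounds: "0 < h0" "\<And>t. h0 \<le> h t" "\<And>t. h t \<le> h1"
  shows "\<forall>I :: real set. is_interval I \<and> bounded I \<longrightarrow>
           (\<forall>t\<in>I. domA \<Omega> r rinv nu t = domD \<Omega> p nu)"
proof (intro allI impI ballI)
  fix I :: "real set" and t
  obtain U V where r: "closure \<Omega> \<subseteq> U" "C2_on U (r t)"
    and rinv: "r t ` closure \<Omega> \<subseteq> V" "C2_on V (rinv t)"
    using r_C2[of t] rinv_C2[of t] by blast
  have "h t \<noteq> 0"
    using h_bounds(1) h_bounds(2)[of t] by linarith
  have "\<exists>c. c \<noteq> 0 \<and> (\<forall>k. Kfun r rinv nu t y * (nu y $ k * (\<Sum>j\<in>UNIV. a_coef r rinv t j k y))
      = c * (nu y $ k * (\<Sum>j\<in>UNIV. ptilde p j k y)))" if "y \<in> frontier \<Omega>" for y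
  proof (intro exI conjI allI)
    show "Kfun r rinv nu t y * (h t)\<^sup>2 \<noteq> 0"
      using Kfun_nonzero[where r = r and rinv = rinv and t = t, OF O_open O_C2
          r(1) C2_on_imp_C1_on[OF r(2)] rinv(1) C2_on_imp_C1_on[OF rinv(2)] rinv_left that]
        \<open>h t \<noteq> 0\<close>
      by simp
    have "y \<in> closure \<Omega>"
      using that by (simp add: frontier_def)
    then have a_coef: "a_coef r rinv t j k y = (h t)\<^sup>2 * ptilde p j k y" for j k
      by (intro a_coef_factor H1_fact)
    show "Kfun r rinv nu t y * (nu y $ k * (\<Sum>j\<in>UNIV. a_coef r rinv t j k y))
        = Kfun r rinv nu t y * (h t)\<^sup>2 * (nu y $ k * (\<Sum>j\<in>UNIV. ptilde p j k y))" for k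
      by (simp add: a_coef sum_distrib_left[symmetric] mult.left_commute)
  qed
  then have "bc_zero \<Omega> (\<lambda>k y. Kfun r rinv nu t y * (nu y $ k * (\<Sum>j\<in>UNIV. a_coef r rinv t j k y))) v
      = bc_zero \<Omega> (\<lambda>k y. nu y $ k * (\<Sum>j\<in>UNIV. ptilde p j k y)) v" for v
    by (rule bc_zero_scale_cong)
  then show "domA \<Omega> r rinv nu t = domD \<Omega> p nu"
    unfolding domA_def domD_def by simp
qed

end
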